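(* Let $t\geq 2$ be an integer, $m=4t+2$, $n=2^m+1$, $\delta_1=\frac{n}{5}$ and $\delta_2=2^{4t-1}+\frac{2^{4t}-1}{5}$. If $x$ is an odd integer with $\delta_2<x\leq n-1$ and $x\neq\delta_1$, then $x$ is not a coset leader modulo $n$.
   Context: For $n=2^m+1$ and an integer $x$, the 2-cyclotomic coset of $x$ modulo $n$ is $C_x=\{x\cdot 2^{j} \bmod n : j\geq 0\}\subseteq\{0,1,\dots,n-1\}$. For $0\leq x\leq n-1$, "$x$ is a coset leader" means that $x$ is the smallest element of $C_x$. *)

theory Defs
  imports Main
begin

definition cyc_coset :: "nat \<Rightarrow> nat \<Rightarrow> nat set" where
  "cyc_coset n x = {x * 2 ^ j mod n | j. True}"

definition coset_leader :: "nat \<Rightarrow> nat \<Rightarrow> bool" where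
  "coset_leader n x \<longleftrightarrow> x < n \<and> (\<forall>y \<in> cyc_coset n x. x \<le> y)"

end

theory Submission
  imports Defs "HOL-Number_Theory.Cong"
begin

text \<open>
  Since \<open>2^m \<equiv> -1 (mod n)\<close>, every residue in \<open>[0, n)\<close> congruent to \<open>\<plusminus>x\<cdot>2^k\<close> lies in the
  coset of \<open>x\<close>, so a leader \<open>x\<close> is below all of them. Comparing \<open>x\<close> with \<open>n - x\<close>,
  \<open>n - 2x\<close>, \<open>4x - n\<close> and \<open>n - 4x\<close> forces \<open>x < n/5\<close> (\<open>n\<close> is odd and prime to 3), so
  \<open>x\<close> lies in the window \<open>(7n/40, n/5]\<close>. Multiplication by 16 maps this window into
  \<open>(3n - n/5, 3n + n/5]\<close>, so some residue of \<open>\<plusminus>16^j x\<close> stays in the window for every \<open>j\<close>,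
  by minimality of \<open>x\<close>. But \<open>16^(t+1) = 4(n - 1) \<equiv> -4\<close>, and neither \<open>4x\<close> nor \<open>n - 4x\<close>
  lies in the window.
\<close>

lemma pow2_cong_minus_one:
  assumes "n = 2 ^ m + 1"
  shows "[(2::int) ^ m = -1] (mod int n)"
  by (simp add: assms cong_iff_dvd_diff add.commute)

lemma cyc_coset_memI_signed:
  assumes "n = 2 ^ m + 1" "\<sigma> \<in> {1, -1}" "e < n"
    and "[int e = \<sigma> * int x * 2 ^ k] (mod int n)"
  shows "e \<in> cyc_coset n x"
proof -
  obtain k' where sign: "[\<sigma> * 2 ^ k = 2 ^ k'] (mod int n)"
  proof (cases "\<sigma> = 1")
    case True
    then show ?thesis using that[of k] by simp
  next
    case False
    then have "\<sigma> = -1" using assms(2) by simp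
    then have "[\<sigma> * 2 ^ k = 2 ^ k * 2 ^ m] (mod int n)"
      using cong_scalar_left[OF pow2_cong_minus_one[OF assms(1)], of "2 ^ k"]
      by (simp add: cong_sym)
    then show ?thesis using that[of "k + m"] by (simp add: power_add)
  qed
  have "[int e = int x * (\<sigma> * 2 ^ k)] (mod int n)"
    using assms(4) by (simp add: ac_simps)
  also have "[int x * (\<sigma> * 2 ^ k) = int x * 2 ^ k'] (mod int n)"
    by (rule cong_scalar_left[OF sign])
  finally have "[int e = int (x * 2 ^ k')] (mod int n)" by simp
  then have "[e = x * 2 ^ k'] (mod n)" by (simp only: cong_int_iff)
  then have "e = x * 2 ^ k' mod n"
    using assms(3) by (simp add: cong_def)
  then show ?thesis by (auto simp: cyc_coset_def)
qed

lemma coset_leader_le_signed_multiple: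
  assumes "coset_leader n x" "n = 2 ^ m + 1" "\<sigma> \<in> {1, -1}" "e < n"
    and "[int e = \<sigma> * int x * 2 ^ k] (mod int n)"
  shows "x \<le> e"
  using assms cyc_coset_memI_signed[of n m \<sigma> e x k] by (auto simp: coset_leader_def)

lemma three_not_dvd_pow2_plus_one:
  assumes "even m"
  shows "\<not> 3 dvd (2::nat) ^ m + 1"
proof -
  obtain k where "m = 2 * k" using assms by blast
  then have "(2::nat) ^ m mod 3 = 1"
    by (simp add: power_mult power_mod[of 4 3 k, symmetric])
  then show ?thesis by presburger
qed

lemma coset_leader_lt_fifth:
  assumes leader: "coset_leader n x" and n: "n = 2 ^ m + 1"
    and "0 < m" "even m" "5 * x \<noteq> n"
  shows "5 * x < n"
proof -
  note le = coset_leader_le_signed_multiple[OF leader n]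
  have "x < n" using leader by (simp add: coset_leader_def)
  have "odd n" using n \<open>0 < m\<close> by simp
  have "\<not> 3 dvd n" using n three_not_dvd_pow2_plus_one \<open>even m\<close> by simp
  have "2 * x < n"
  proof (rule ccontr)
    assume "\<not> 2 * x < n"
    with \<open>odd n\<close> have "n < 2 * x" by presburger
    moreover have "x \<le> n - x"
      using \<open>x < n\<close> calculation by (intro le[of "-1" _ 0]) (auto simp: cong_iff_dvd_diff of_nat_diff)
    ultimately show False by linarith
  qed
  have "3 * x < n"
  proof (rule ccontr)
    assume "\<not> 3 * x < n"
    with \<open>\<not> 3 dvd n\<close> have "n < 3 * x" by (metis dvd_triv_left nat_neq_iff)
    moreover have "x \<le> n - 2 * x"
      using \<open>2 * x < n\<close> calculation
      by (intro le[of "-1" _ 1]) (auto simp: cong_iff_dvd_diff of_nat_diff)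
    ultimately show False by linarith
  qed
  have "4 * x < n"
  proof (rule ccontr)
    assume "\<not> 4 * x < n"
    with \<open>odd n\<close> have "n < 4 * x" by presburger
    moreover have "x \<le> 4 * x - n"
      using \<open>2 * x < n\<close> calculation
      by (intro le[of 1 _ 2]) (auto simp: cong_iff_dvd_diff of_nat_diff)
    ultimately show False using \<open>3 * x < n\<close> by linarith
  qed
  show "5 * x < n"
  proof (rule ccontr)
    assume "\<not> 5 * x < n"
    with \<open>5 * x \<noteq> n\<close> have "n < 5 * x" by linarith
    moreover have "x \<le> n - 4 * x"
      using \<open>4 * x < n\<close> calculation
      by (intro le[of "-1" _ 2]) (auto simp: cong_iff_dvd_diff of_nat_diff)
    ultimately show False by linarith
  qed
qed

lemma sixteen_mult_fold_into_fifth: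
  fixes n e :: nat
  assumes "7 * n < 40 * e" "5 * e \<le> n"
  obtains e' \<sigma> where "\<sigma> \<in> {1, -1::int}" "5 * e' \<le> n" "e' < n"
    and "[int e' = \<sigma> * (16 * int e)] (mod int n)"
proof (cases "3 * n \<le> 16 * e")
  case True
  then show ?thesis
    using assms by (intro that[of 1 "16 * e - 3 * n"]) (auto simp: cong_iff_dvd_diff of_nat_diff)
next
  case False
  then show ?thesis
    using assms by (intro that[of "-1" "3 * n - 16 * e"]) (auto simp: cong_iff_dvd_diff of_nat_diff)
qed

lemma coset_leader_sixteen_orbit_in_fifth:
  assumes leader: "coset_leader n x" and n: "n = 2 ^ m + 1"
    and "7 * n < 40 * x" "5 * x < n"
  shows "\<exists>e \<sigma>. \<sigma> \<in> {1, -1::int} \<and> x \<le> e \<and> 5 * e \<le> n \<and> [int e = \<sigma> * int x * 16 ^ j] (mod int n)"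
proof (induction j)
  case 0
  show ?case using \<open>5 * x < n\<close> by (intro exI[of _ x] exI[of _ 1]) auto
next
  case (Suc j)
  then obtain e \<sigma> where "\<sigma> \<in> {1, -1::int}" "x \<le> e" "5 * e \<le> n"
    and e: "[int e = \<sigma> * int x * 16 ^ j] (mod int n)" by blast
  moreover have "7 * n < 40 * e" using \<open>7 * n < 40 * x\<close> \<open>x \<le> e\<close> by linarith
  ultimately obtain e' \<sigma>' where "\<sigma>' \<in> {1, -1::int}" "5 * e' \<le> n" "e' < n"
    and e': "[int e' = \<sigma>' * (16 * int e)] (mod int n)"
    using sixteen_mult_fold_into_fifth by metis
  moreover have "\<sigma>' * \<sigma> \<in> {1, -1}" using \<open>\<sigma> \<in> {1, -1}\<close> \<open>\<sigma>' \<in> {1, -1}\<close> by auto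
  moreover have "[int e' = (\<sigma>' * \<sigma>) * int x * 16 ^ Suc j] (mod int n)"
  proof -
    note e'
    also have "[\<sigma>' * (16 * int e) = \<sigma>' * 16 * (\<sigma> * int x * 16 ^ j)] (mod int n)"
      using cong_scalar_left[OF e, of "\<sigma>' * 16"] by (simp add: ac_simps)
    also have "\<sigma>' * 16 * (\<sigma> * int x * 16 ^ j) = (\<sigma>' * \<sigma>) * int x * 16 ^ Suc j"
      by (simp add: ac_simps)
    finally show ?thesis .
  qed
  moreover have "(2::int) ^ (4 * Suc j) = 16 ^ Suc j"
    unfolding power_mult by simp
  ultimately show ?case
    using coset_leader_le_signed_multiple[OF leader n, of "\<sigma>' * \<sigma>" e' "4 * Suc j"]
    by auto
qed

lemma not_cong_minus_four_times:
  fixes n x e :: nat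
  assumes "7 * n < 40 * x" "5 * x < n" "5 * e \<le> n" "\<sigma> \<in> {1, -1::int}"
  shows "\<not> [int e = \<sigma> * int x * (-4)] (mod int n)"
proof
  assume cong: "[int e = \<sigma> * int x * (-4)] (mod int n)"
  consider "\<sigma> = 1" | "\<sigma> = -1" using assms(4) by blast
  then show False
  proof cases
    case 1
    with cong have "int n dvd int e + 4 * int x" by (simp add: cong_iff_dvd_diff ac_simps)
    moreover have "0 < int e + 4 * int x" "int e + 4 * int x < int n" using assms by linarith+
    ultimately show False using zdvd_not_zless by blast
  next
    case 2
    with cong have "int n dvd 4 * int x - int e"
      by (simp add: cong_iff_dvd_diff dvd_diff_commute ac_simps)
    moreover have "0 < 4 * int x - int e" "4 * int x - int e < int n" using assms by linarith+
    ultimately show False using zdvd_not_zless by blast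
  qed
qed

lemma forty_times_delta2:
  assumes "t \<ge> 1"
  shows "40 * (2 ^ (4 * t - 1) + (2 ^ (4 * t) - 1) div 5) + 15 = 7 * (2 ^ (4 * t + 2) + 1 :: nat)"
proof -
  define T :: nat where "T = 2 ^ (4 * t)"
  define A :: nat where "A = 2 ^ (4 * t - 1)"
  define D :: nat where "D = (T - 1) div 5"
  have "T mod 5 = 1" unfolding T_def by (simp add: power_mult power_mod[of 16 5 t, symmetric])
  then have "5 * D + 1 = T" unfolding D_def by presburger
  moreover have "2 * A = T"
    using assms by (simp add: A_def T_def flip: power_Suc)
  moreover have "2 ^ (4 * t + 2) = 4 * T" by (simp add: T_def power_add)
  ultimately have "40 * (A + D) + 15 = 7 * (2 ^ (4 * t + 2) + 1)" by simp
  then show ?thesis by (simp only: A_def D_def T_def)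
qed

theorem lemma4p4:
  fixes t m n x :: nat
  assumes "t \<ge> 2"
    and "m = 4 * t + 2"
    and "n = 2 ^ m + 1"
    and "odd x"
    and "2 ^ (4 * t - 1) + (2 ^ (4 * t) - 1) div 5 < x"
    and "x \<le> n - 1"
    and "5 * x \<noteq> n"
  shows "\<not> coset_leader n x"
proof
  assume leader: "coset_leader n x"
  have n: "n = 2 ^ m + 1" by fact
  define \<delta>\<^sub>2 where "\<delta>\<^sub>2 = 2 ^ (4 * t - 1) + (2 ^ (4 * t) - 1) div (5::nat)"
  have "40 * \<delta>\<^sub>2 + 15 = 7 * n"
    using forty_times_delta2[of t] assms(1-3) by (simp add: \<delta>\<^sub>2_def)
  moreover have "\<delta>\<^sub>2 < x" using assms(5) by (simp add: \<delta>\<^sub>2_def)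
  ultimately have window: "7 * n < 40 * x" by linarith
  have "5 * x < n"
    using coset_leader_lt_fifth[OF leader n] assms(2,7) by simp
  then obtain e \<sigma> where "\<sigma> \<in> {1, -1::int}" "5 * e \<le> n"
    and e: "[int e = \<sigma> * int x * 16 ^ (t + 1)] (mod int n)"
    using coset_leader_sixteen_orbit_in_fifth[OF leader n window] by blast
  have "(16::int) ^ (t + 1) - (-4) = int n * 4"
    using assms(2,3) by (simp add: power_add power_mult)
  then have "[(16::int) ^ (t + 1) = -4] (mod int n)"
    unfolding cong_iff_dvd_diff by (metis dvd_triv_left)
  then have "[int e = \<sigma> * int x * (-4)] (mod int n)"
    using cong_trans[OF e cong_scalar_left] by blast
  then show False
    using not_cong_minus_four_times window \<open>5 * x < n\<close> \<open>5 * e \<le> n\<close> \<open>\<sigma> \<in> {1, -1}\<close> by blast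
qed

end
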